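(* Let $\mathbb{F}_q$ be a finite field, let $(\star)$ be an arbitrary (not necessarily balanced) linear system over $\mathbb{F}_q$ with coefficient matrix $A\in\mathbb{F}_q^{m\times k}$, and let $b_1,\dots,b_l\in\mathbb{F}_q\setminus\{0\}$ with $b_1+\dots+b_l=0$. Then there are constants $\beta,\gamma\ge1$ with $\gamma<q$ such that, for every $n$ and every subset $S\subseteq\mathbb{F}_q^n$ with $|S|\ge\beta\gamma^n$, there is a linearly generic solution $(y_1,\dots,y_k)$ of $(\star)$ with all $y_j$ in the set $\big(b_1\cdot S\,\dot+_{\mathrm{aff}}\cdots\dot+_{\mathrm{aff}}\,b_l\cdot S\big)\cup\{0\}$.
   Context: For $S_1,\dots,S_l\subseteq\mathbb{F}_q^n$, the affinely independent restricted sumset is $S_1\dot+_{\mathrm{aff}}\cdots\dot+_{\mathrm{aff}}S_l:=\{x_1+\cdots+x_l: x_1\in S_1,\dots,x_l\in S_l \text{ affinely independent}\}$, and $b\cdot S=\{bx:x\in S\}$. A solution of $(\star)$ is a tuple $(y_1,\dots,y_k)\in(\mathbb{F}_q^n)^k$ with $\sum_j a_{ij}y_j=0$ for all $i\in[m]$. It is linearly generic if every linear equation $c_1y_1+\dots+c_ky_k=0$ ($c\in\mathbb{F}_q^k$) that it satisfies has $c$ in the row space of $A$. *)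

theory Defs
  imports Complex_Main
begin

text \<open>Vectors of F_q^n are represented as functions nat => 'a vanishing outside {..<n}.\<close>

definition fvecs :: "nat \<Rightarrow> (nat \<Rightarrow> 'a::zero) set" where
  "fvecs n = {v. \<forall>i\<ge>n. v i = 0}"

definition vscale :: "'a::times \<Rightarrow> (nat \<Rightarrow> 'a) \<Rightarrow> (nat \<Rightarrow> 'a)" where
  "vscale c v = (\<lambda>t. c * v t)"

definition vsum :: "'b set \<Rightarrow> ('b \<Rightarrow> nat \<Rightarrow> 'a::comm_monoid_add) \<Rightarrow> (nat \<Rightarrow> 'a)" where
  "vsum I f = (\<lambda>t. \<Sum>i\<in>I. f i t)"

definition set_scale :: "'a::times \<Rightarrow> (nat \<Rightarrow> 'a) set \<Rightarrow> (nat \<Rightarrow> 'a) set" where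
  "set_scale b S = vscale b ` S"

definition aff_indep :: "nat \<Rightarrow> (nat \<Rightarrow> nat \<Rightarrow> 'a::field) \<Rightarrow> bool" where
  "aff_indep l x \<longleftrightarrow>
     (\<forall>c. (\<Sum>i<l. c i) = 0 \<and> vsum {..<l} (\<lambda>i. vscale (c i) (x i)) = (\<lambda>_. 0)
          \<longrightarrow> (\<forall>i<l. c i = 0))"

definition aff_sumset :: "nat \<Rightarrow> (nat \<Rightarrow> (nat \<Rightarrow> 'a::field) set) \<Rightarrow> (nat \<Rightarrow> 'a) set" where
  "aff_sumset l Ss = {vsum {..<l} x | x. (\<forall>i<l. x i \<in> Ss i) \<and> aff_indep l x}"

definition is_solution :: "nat \<Rightarrow> nat \<Rightarrow> (nat \<Rightarrow> nat \<Rightarrow> 'a::field) \<Rightarrow> (nat \<Rightarrow> nat \<Rightarrow> 'a) \<Rightarrow> bool" where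
  "is_solution m k A y \<longleftrightarrow>
     (\<forall>i<m. vsum {..<k} (\<lambda>j. vscale (A i j) (y j)) = (\<lambda>_. 0))"

definition lin_generic :: "nat \<Rightarrow> nat \<Rightarrow> (nat \<Rightarrow> nat \<Rightarrow> 'a::field) \<Rightarrow> (nat \<Rightarrow> nat \<Rightarrow> 'a) \<Rightarrow> bool" where
  "lin_generic m k A y \<longleftrightarrow>
     (\<forall>c. vsum {..<k} (\<lambda>j. vscale (c j) (y j)) = (\<lambda>_. 0)
          \<longrightarrow> (\<exists>d. \<forall>j<k. c j = (\<Sum>i<m. d i * A i j)))"

end

theory Submission
  imports Defs "HOL-Library.Function_Algebras" "HOL-Library.FuncSet"
begin

(*
  Averaging over the translates a + W of the solution space W of the system in (F_q^n)^k, some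
  translate meets S^k in a set P of at least |W| |S|^k / q^(nk) solutions. For u_1, ..., u_l in P
  the combination y = sum_i b_i u_i again solves the system, and since sum_i b_i = 0 its entries
  are y_j = sum_i b_i (a_j + u_ij) with all a_j + u_ij in S. A tuple is bad if e.y = 0 for some
  functional e outside the row space of A, or if for some coordinate j that does not vanish on
  the whole kernel the summands b_i (a_j + u_ij) are linearly dependent. Each of the at most
  q^k + k q^l bad events prescribes the image of one u_i under a linear map from W onto F_q^n,
  so it occurs for at most |P|^(l-1) |W| / q^n tuples; a good tuple therefore exists once
  |S|^k is large compared to q^(n(k-1)), i.e. once |S| >= beta gamma^n with gamma = q^(1-1/k).
  Linear genericity of y holds because a functional vanishing on the kernel of A lies in the
  row space of A.
*)

section \<open>Counting in abelian groups and in finite products\<close>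

lemma card_fiber_eq_card_kernel:
  fixes L :: "'a::ab_group_add \<Rightarrow> 'b::ab_group_add"
  assumes add: "\<And>u w. u \<in> W \<Longrightarrow> w \<in> W \<Longrightarrow> u + w \<in> W"
    and diff: "\<And>u w. u \<in> W \<Longrightarrow> w \<in> W \<Longrightarrow> u - w \<in> W"
    and hom: "\<And>u w. u \<in> W \<Longrightarrow> w \<in> W \<Longrightarrow> L (u + w) = L u + L w"
    and "v \<in> L ` W"
  shows "card {w\<in>W. L w = v} = card {w\<in>W. L w = 0}"
proof -
  obtain x where x: "x \<in> W" "L x = v" using \<open>v \<in> L ` W\<close> by blast
  have hom_diff: "L (u - x) = L u - L x" if "u \<in> W" for u
    using hom[OF diff[OF that x(1)] x(1)] by (simp add: algebra_simps)
  have "bij_betw (\<lambda>w. w - x) {w\<in>W. L w = v} {w\<in>W. L w = 0}"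
    by (rule bij_betwI[where g = "\<lambda>w. w + x"]) (auto simp: x diff add hom hom_diff)
  then show ?thesis by (rule bij_betw_same_card)
qed

lemma card_eq_card_image_mult_card_kernel:
  fixes L :: "'a::ab_group_add \<Rightarrow> 'b::ab_group_add"
  assumes "finite W"
    and add: "\<And>u w. u \<in> W \<Longrightarrow> w \<in> W \<Longrightarrow> u + w \<in> W"
    and diff: "\<And>u w. u \<in> W \<Longrightarrow> w \<in> W \<Longrightarrow> u - w \<in> W"
    and hom: "\<And>u w. u \<in> W \<Longrightarrow> w \<in> W \<Longrightarrow> L (u + w) = L u + L w"
  shows "card W = card (L ` W) * card {w\<in>W. L w = 0}"
proof -
  have "W = (\<Union>v\<in>L ` W. {w\<in>W. L w = v})" by blast
  then have "card W = (\<Sum>v\<in>L ` W. card {w\<in>W. L w = v})"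
    using \<open>finite W\<close> by (subst card_UN_disjoint[symmetric]) auto
  also have "\<dots> = (\<Sum>v\<in>L ` W. card {w\<in>W. L w = 0})"
    using card_fiber_eq_card_kernel[of W L, OF add diff hom] by simp
  finally show ?thesis by simp
qed

lemma exists_translate_hitting_many:
  fixes V W Z :: "'a::ab_group_add set"
  assumes "finite V" "V \<noteq> {}" "W \<subseteq> V" "Z \<subseteq> V"
    and diff: "\<And>u w. u \<in> V \<Longrightarrow> w \<in> V \<Longrightarrow> u - w \<in> V"
  shows "\<exists>a\<in>V. card W * card Z \<le> card V * card {w\<in>W. a + w \<in> Z}"
proof -
  let ?hits = "\<lambda>a. card {w\<in>W. a + w \<in> Z}"
  have finW: "finite W" using assms(1,3) by (rule finite_subset[rotated])
  have translates: "card {a\<in>V. a + w \<in> Z} = card Z" if "w \<in> W" for w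
  proof -
    have "bij_betw (\<lambda>a. a + w) {a\<in>V. a + w \<in> Z} Z"
      by (rule bij_betwI[where g = "\<lambda>z. z - w"]) (use that assms(3,4) diff in auto)
    then show ?thesis by (rule bij_betw_same_card)
  qed
  have "(\<Sum>a\<in>V. ?hits a) = (\<Sum>a\<in>V. \<Sum>w\<in>W. if a + w \<in> Z then 1 else 0)"
    using finW by (simp add: sum.If_cases Int_def)
  also have "\<dots> = (\<Sum>w\<in>W. \<Sum>a\<in>V. if a + w \<in> Z then 1 else 0)" by (rule sum.swap)
  also have "\<dots> = (\<Sum>w\<in>W. card {a\<in>V. a + w \<in> Z})"
    using \<open>finite V\<close> by (simp add: sum.If_cases Int_def)
  also have "\<dots> = card W * card Z" by (simp add: translates)
  finally have total: "(\<Sum>a\<in>V. ?hits a) = card W * card Z" .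
  have "Max (?hits ` V) \<in> ?hits ` V" using \<open>finite V\<close> \<open>V \<noteq> {}\<close> by (intro Max_in) auto
  then obtain a where "a \<in> V" "?hits a = Max (?hits ` V)" by auto
  moreover have "(\<Sum>a\<in>V. ?hits a) \<le> card V * Max (?hits ` V)"
    using sum_le_card_Max \<open>finite V\<close> .
  ultimately show ?thesis using total by metis
qed

lemma card_PiE_coordinate_constrained:
  assumes "finite I" "i \<in> I" "finite P"
    and bound: "\<And>u. u \<in> PiE I (\<lambda>_. P) \<Longrightarrow> card {x\<in>P. Q (u(i := x))} \<le> N"
  shows "card {u \<in> PiE I (\<lambda>_. P). Q u} \<le> N * card P ^ (card I - 1)"
proof -
  let ?R = "PiE (I - {i}) (\<lambda>_. P)"
  let ?slice = "\<lambda>r. (\<lambda>x. r(i := x)) ` {x\<in>P. Q (r(i := x))}"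
  have I: "insert i (I - {i}) = I" using \<open>i \<in> I\<close> by blast
  have cover: "{u \<in> PiE I (\<lambda>_. P). Q u} \<subseteq> (\<Union>r\<in>?R. ?slice r)"
  proof
    fix u assume u: "u \<in> {u \<in> PiE I (\<lambda>_. P). Q u}"
    then have "u(i := undefined) \<in> ?R" using fun_upd_in_PiE[of i "I - {i}" u] I by simp
    moreover have "u \<in> ?slice (u(i := undefined))"
      using u \<open>i \<in> I\<close> by (auto simp: PiE_iff intro!: image_eqI[where x = "u i"])
    ultimately show "u \<in> (\<Union>r\<in>?R. ?slice r)" by blast
  qed
  have slice: "card (?slice r) \<le> N" if "r \<in> ?R" for r
  proof (cases "P = {}")
    case False
    then obtain p where "p \<in> P" by blast
    then have "r(i := p) \<in> PiE I (\<lambda>_. P)"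
      using PiE_fun_upd[of p "\<lambda>_. P" i r "I - {i}"] that I by simp
    from bound[OF this] have "card {x\<in>P. Q (r(i := x))} \<le> N" by simp
    with \<open>finite P\<close> show ?thesis by (auto intro: order_trans[OF card_image_le])
  qed simp
  have "finite ?R" using assms by (simp add: finite_PiE)
  then have "card {u \<in> PiE I (\<lambda>_. P). Q u} \<le> card (\<Union>r\<in>?R. ?slice r)"
    using cover \<open>finite P\<close> by (intro card_mono) auto
  also have "\<dots> \<le> (\<Sum>r\<in>?R. card (?slice r))" using \<open>finite ?R\<close> by (rule card_UN_le)
  also have "\<dots> \<le> card ?R * N" using sum_bounded_above[of ?R "\<lambda>r. card (?slice r)" N] slice by simp
  also have "card ?R = card P ^ (card I - 1)"
    using assms by (simp add: card_PiE card_Diff_singleton)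
  finally show ?thesis by (simp only: mult.commute)
qed

lemma card_UN_mult_le:
  assumes "finite I" and "\<And>i. i \<in> I \<Longrightarrow> card (F i) * Q \<le> M"
  shows "card (\<Union>i\<in>I. F i) * Q \<le> card I * M"
proof -
  have "card (\<Union>i\<in>I. F i) * Q \<le> (\<Sum>i\<in>I. card (F i)) * Q"
    by (rule mult_right_mono[OF card_UN_le[OF assms(1)]]) simp
  also have "\<dots> = (\<Sum>i\<in>I. card (F i) * Q)" by (simp add: sum_distrib_right)
  also have "\<dots> \<le> card I * M" using sum_bounded_above[of I "\<lambda>i. card (F i) * Q" M] assms(2) by simp
  finally show ?thesis .
qed

section \<open>Functions supported on an initial segment\<close>

definition prefix_Pi :: "nat \<Rightarrow> (nat \<Rightarrow> 'b set) \<Rightarrow> (nat \<Rightarrow> 'b::zero) set" where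
  "prefix_Pi k E = {f. (\<forall>j<k. f j \<in> E j) \<and> (\<forall>j\<ge>k. f j = 0)}"

lemma bij_betw_restrict_prefix_Pi: "bij_betw (\<lambda>f. restrict f {..<k}) (prefix_Pi k E) (PiE {..<k} E)"
  by (rule bij_betwI[where g = "\<lambda>g j. if j < k then g j else 0"])
    (auto simp: prefix_Pi_def PiE_iff extensional_def fun_eq_iff)

lemma finite_prefix_Pi: "(\<And>j. j < k \<Longrightarrow> finite (E j)) \<Longrightarrow> finite (prefix_Pi k E)"
  using bij_betw_finite[OF bij_betw_restrict_prefix_Pi[of k E]] finite_PiE[of "{..<k}" E] by simp

lemma card_prefix_Pi: "card (prefix_Pi k E) = (\<Prod>j<k. card (E j))"
  using bij_betw_same_card[OF bij_betw_restrict_prefix_Pi] by (simp add: card_PiE)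

lemma fvecs_eq_prefix_Pi: "fvecs n = prefix_Pi n (\<lambda>_. UNIV)"
  by (simp add: fvecs_def prefix_Pi_def)

lemma finite_fvecs: "finite (fvecs n :: (nat \<Rightarrow> 'a::{finite,zero}) set)"
  by (simp add: fvecs_eq_prefix_Pi finite_prefix_Pi)

lemma card_fvecs: "card (fvecs n :: (nat \<Rightarrow> 'a::{finite,zero}) set) = card (UNIV :: 'a set) ^ n"
  by (simp add: fvecs_eq_prefix_Pi card_prefix_Pi)

section \<open>Functionals vanishing on the kernel lie in the row space\<close>

definition scalar_kernel :: "nat \<Rightarrow> nat \<Rightarrow> (nat \<Rightarrow> nat \<Rightarrow> 'a::field) \<Rightarrow> (nat \<Rightarrow> 'a) set" where
  "scalar_kernel m k R = {w. (\<forall>j\<ge>k. w j = 0) \<and> (\<forall>i<m. (\<Sum>j<k. R i j * w j) = 0)}"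

definition annihilates_kernel :: "nat \<Rightarrow> nat \<Rightarrow> (nat \<Rightarrow> nat \<Rightarrow> 'a::field) \<Rightarrow> (nat \<Rightarrow> 'a) \<Rightarrow> bool" where
  "annihilates_kernel m k R c \<longleftrightarrow> (\<forall>w\<in>scalar_kernel m k R. (\<Sum>j<k. c j * w j) = 0)"

lemma annihilates_kernel_zero_column:
  assumes zero: "\<forall>i<m. R i k = 0" and ann: "annihilates_kernel m (Suc k) R c"
  shows "c k = 0" and "annihilates_kernel m k R c"
proof -
  let ?e = "\<lambda>j. if j = k then 1 else 0"
  have "?e \<in> scalar_kernel m (Suc k) R" using zero by (simp add: scalar_kernel_def)
  with ann have "(\<Sum>j<Suc k. c j * ?e j) = 0" by (simp only: annihilates_kernel_def)
  then show "c k = 0" by simp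
  show "annihilates_kernel m k R c"
    unfolding annihilates_kernel_def
  proof
    fix w assume w: "w \<in> scalar_kernel m k R"
    then have "w \<in> scalar_kernel m (Suc k) R" by (simp add: scalar_kernel_def)
    with ann have "(\<Sum>j<Suc k. c j * w j) = 0" unfolding annihilates_kernel_def by blast
    moreover have "w k = 0" using w by (simp add: scalar_kernel_def)
    ultimately show "(\<Sum>j<k. c j * w j) = 0" by simp
  qed
qed

lemma annihilates_kernel_eliminate_column:
  assumes p: "p < m" "R p k \<noteq> 0" and ann: "annihilates_kernel m (Suc k) R c"
  shows "annihilates_kernel m k (\<lambda>i j. R i j - R i k / R p k * R p j)
           (\<lambda>j. c j - c k / R p k * R p j)"
  unfolding annihilates_kernel_def
proof
  fix w assume w: "w \<in> scalar_kernel m k (\<lambda>i j. R i j - R i k / R p k * R p j)"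
  define w' where "w' = w(k := - (\<Sum>j<k. R p j * w j) / R p k)"
  have reduce: "(\<Sum>j<Suc k. (f j - f k / R p k * R p j) * w' j)
      = (\<Sum>j<Suc k. f j * w' j) - f k / R p k * (\<Sum>j<Suc k. R p j * w' j)" for f
    by (simp add: algebra_simps sum_subtractf sum_distrib_left)
  have drop_last: "(\<Sum>j<Suc k. (f j - f k / R p k * R p j) * w' j)
      = (\<Sum>j<k. (f j - f k / R p k * R p j) * w j)" for f
    using p by (simp add: w'_def)
  have pivot_row: "(\<Sum>j<Suc k. R p j * w' j) = 0"
    using p by (simp add: w'_def)
  have "w' \<in> scalar_kernel m (Suc k) R"
  proof -
    have "(\<Sum>j<Suc k. R i j * w' j) = 0" if "i < m" for i
      using reduce[of "R i"] drop_last[of "R i"] pivot_row w that by (simp add: scalar_kernel_def)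
    then show ?thesis using w by (simp add: scalar_kernel_def w'_def)
  qed
  with ann have "(\<Sum>j<Suc k. c j * w' j) = 0" unfolding annihilates_kernel_def by blast
  then show "(\<Sum>j<k. (c j - c k / R p k * R p j) * w j) = 0"
    using reduce[of c] drop_last[of c] pivot_row by simp
qed

lemma row_space_undo_elimination:
  fixes R :: "nat \<Rightarrow> nat \<Rightarrow> 'a::field"
  assumes p: "p < m" "R p k \<noteq> 0"
    and d': "\<forall>j<k. c j - c k / R p k * R p j = (\<Sum>i<m. d' i * (R i j - R i k / R p k * R p j))"
  shows "\<exists>d. \<forall>j<Suc k. c j = (\<Sum>i<m. d i * R i j)"
proof -
  define t where "t = (c k - (\<Sum>i<m. d' i * R i k)) / R p k"
  define d where "d i = d' i + (if i = p then t else 0)" for i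
  have d_sum: "(\<Sum>i<m. d i * R i j) = (\<Sum>i<m. d' i * R i j) + t * R p j" for j
  proof -
    have "(\<Sum>i<m. d i * R i j) = (\<Sum>i<m. d' i * R i j + (if i = p then t * R p j else 0))"
      by (rule sum.cong) (auto simp: d_def distrib_right)
    then show ?thesis using p by (simp add: sum.distrib)
  qed
  have "c j = (\<Sum>i<m. d i * R i j)" if "j < Suc k" for j
  proof (cases "j = k")
    case False
    then have "c j - c k / R p k * R p j = (\<Sum>i<m. d' i * (R i j - R i k / R p k * R p j))"
      using d' that by simp
    then show ?thesis using p
      by (simp add: d_sum t_def algebra_simps sum_subtractf sum_distrib_left sum_distrib_right
          sum_divide_distrib diff_divide_distrib)
  qed (use p in \<open>simp add: d_sum t_def\<close>)
  then show ?thesis by blast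
qed

lemma in_row_space_if_annihilates_kernel:
  fixes R :: "nat \<Rightarrow> nat \<Rightarrow> 'a::field"
  shows "annihilates_kernel m k R c \<Longrightarrow> \<exists>d. \<forall>j<k. c j = (\<Sum>i<m. d i * R i j)"
proof (induction k arbitrary: R c)
  case 0
  then show ?case by simp
next
  case (Suc k)
  show ?case
  proof (cases "\<exists>p<m. R p k \<noteq> 0")
    case True
    then obtain p where p: "p < m" "R p k \<noteq> 0" by blast
    from Suc.IH[OF annihilates_kernel_eliminate_column[OF p Suc.prems]]
    show ?thesis using row_space_undo_elimination[of p m R k c] p by blast
  next
    case False
    then have zero: "\<forall>i<m. R i k = 0" by simp
    obtain d where "\<forall>j<k. c j = (\<Sum>i<m. d i * R i j)"
      using Suc.IH[OF annihilates_kernel_zero_column(2)[OF zero Suc.prems]] by blast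
    moreover have "c k = 0" using annihilates_kernel_zero_column(1)[OF zero Suc.prems] .
    ultimately have "\<forall>j<Suc k. c j = (\<Sum>i<m. d i * R i j)" using zero by (auto simp: less_Suc_eq)
    then show ?thesis by blast
  qed
qed

section \<open>The solution space in \<open>(F\<^sub>q\<^sup>n)\<^sup>k\<close>\<close>

abbreviation fvec_tuples :: "nat \<Rightarrow> nat \<Rightarrow> (nat \<Rightarrow> nat \<Rightarrow> 'a::zero) set" where
  "fvec_tuples n k \<equiv> prefix_Pi k (\<lambda>_. fvecs n)"

definition solution_space ::
    "nat \<Rightarrow> nat \<Rightarrow> nat \<Rightarrow> (nat \<Rightarrow> nat \<Rightarrow> 'a::field) \<Rightarrow> (nat \<Rightarrow> nat \<Rightarrow> 'a) set" where
  "solution_space n m k A = {y \<in> fvec_tuples n k. is_solution m k A y}"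

definition lin_comb :: "nat \<Rightarrow> (nat \<Rightarrow> 'a::comm_ring) \<Rightarrow> (nat \<Rightarrow> nat \<Rightarrow> 'a) \<Rightarrow> nat \<Rightarrow> 'a" where
  "lin_comb k c y = vsum {..<k} (\<lambda>j. vscale (c j) (y j))"

lemma lin_comb_apply [simp]: "lin_comb k c y t = (\<Sum>j<k. c j * y j t)"
  by (simp add: lin_comb_def vsum_def vscale_def)

lemma lin_comb_add: "lin_comb k c (u + w) = lin_comb k c u + lin_comb k c w"
  by (simp add: fun_eq_iff sum.distrib algebra_simps)

lemma lin_comb_unit:
  fixes w :: "nat \<Rightarrow> nat \<Rightarrow> 'a::comm_ring_1"
  shows "j < k \<Longrightarrow> lin_comb k (\<lambda>j'. if j' = j then 1 else 0) w = w j"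
  by (simp add: fun_eq_iff if_distrib[of "\<lambda>x. x * _"] sum.delta cong: if_cong)

lemma mem_fvec_tuples_iff: "y \<in> fvec_tuples n k \<longleftrightarrow> (\<forall>j t. (k \<le> j \<or> n \<le> t) \<longrightarrow> y j t = 0)"
  by (auto simp: prefix_Pi_def fvecs_def fun_eq_iff) (metis not_le)

lemma mem_solution_space_iff:
  "y \<in> solution_space n m k A \<longleftrightarrow>
     (\<forall>j t. (k \<le> j \<or> n \<le> t) \<longrightarrow> y j t = 0) \<and> (\<forall>i<m. \<forall>t. (\<Sum>j<k. A i j * y j t) = 0)"
  by (auto simp: solution_space_def mem_fvec_tuples_iff is_solution_def vsum_def vscale_def
      fun_eq_iff)

lemma finite_fvec_tuples: "finite (fvec_tuples n k :: (nat \<Rightarrow> nat \<Rightarrow> 'a::{finite,zero}) set)"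
  by (simp add: finite_prefix_Pi finite_fvecs)

lemma card_fvec_tuples:
  "card (fvec_tuples n k :: (nat \<Rightarrow> nat \<Rightarrow> 'a::{finite,zero}) set) = card (UNIV :: 'a set) ^ (n * k)"
  by (simp add: card_prefix_Pi card_fvecs power_mult)

lemma finite_solution_space: "finite (solution_space n m k (A :: nat \<Rightarrow> nat \<Rightarrow> 'a::{finite,field}))"
  using finite_fvec_tuples by (rule finite_subset[rotated]) (auto simp: solution_space_def)

lemma solution_space_add:
  "u \<in> solution_space n m k A \<Longrightarrow> w \<in> solution_space n m k A \<Longrightarrow> u + w \<in> solution_space n m k A"
  by (simp add: mem_solution_space_iff sum.distrib algebra_simps)

lemma solution_space_diff:
  "u \<in> solution_space n m k A \<Longrightarrow> w \<in> solution_space n m k A \<Longrightarrow> u - w \<in> solution_space n m k A"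
  by (simp add: mem_solution_space_iff sum_subtractf algebra_simps)

lemma zero_mem_solution_space: "0 \<in> solution_space n m k A"
  by (simp add: mem_solution_space_iff)

lemma combination_mem_solution_space:
  assumes "\<forall>i<l. u i \<in> solution_space n m k A"
  shows "(\<lambda>j. vsum {..<l} (\<lambda>i. vscale (b i) (u i j))) \<in> solution_space n m k A"
proof -
  have "(\<Sum>j<k. A r j * (\<Sum>i<l. b i * u i j t)) = (\<Sum>i<l. b i * (\<Sum>j<k. A r j * u i j t))" for r t
    by (simp add: sum_distrib_left sum.swap[of _ "{..<k}"] algebra_simps)
  then show ?thesis using assms by (simp add: mem_solution_space_iff vsum_def vscale_def)
qed

lemma lin_comb_combination:
  "lin_comb k c (\<lambda>j. vsum {..<l} (\<lambda>i. vscale (b i) (u i j)))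
     = vsum {..<l} (\<lambda>i. vscale (b i) (lin_comb k c (u i)))"
  by (simp add: fun_eq_iff vsum_def vscale_def sum_distrib_left sum.swap[of _ "{..<k}"]
      algebra_simps)

lemma lin_comb_mem_fvecs: "y \<in> solution_space n m k A \<Longrightarrow> lin_comb k c y \<in> fvecs n"
  by (simp add: mem_solution_space_iff fvecs_def)

lemma lin_comb_image_solution_space:
  assumes "\<not> annihilates_kernel m k A e"
  shows "lin_comb k e ` solution_space n m k A = fvecs n"
proof
  show "lin_comb k e ` solution_space n m k A \<subseteq> fvecs n" using lin_comb_mem_fvecs by blast
  obtain w where w: "w \<in> scalar_kernel m k A" and s: "(\<Sum>j<k. e j * w j) \<noteq> 0"
    using assms by (auto simp: annihilates_kernel_def)
  show "fvecs n \<subseteq> lin_comb k e ` solution_space n m k A"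
  proof
    fix v :: "nat \<Rightarrow> 'a" assume v: "v \<in> fvecs n"
    \<comment> \<open>the rank-one solution \<open>y\<^sub>j = w\<^sub>j v / (e \<cdot> w)\<close> is mapped to \<open>v\<close>\<close>
    define y where "y = (\<lambda>j t. w j * v t / (\<Sum>j<k. e j * w j))"
    have "(\<Sum>j<k. A i j * y j t) = (\<Sum>j<k. A i j * w j) * v t / (\<Sum>j<k. e j * w j)" for i t
      by (simp add: y_def sum_distrib_left sum_divide_distrib algebra_simps)
    then have "y \<in> solution_space n m k A"
      using w v by (auto simp: mem_solution_space_iff y_def scalar_kernel_def fvecs_def)
    moreover have "(\<Sum>j<k. e j * y j t) = v t * (\<Sum>j<k. e j * w j) / (\<Sum>j<k. e j * w j)" for t
      by (simp add: y_def sum_distrib_left sum_divide_distrib algebra_simps)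
    then have "lin_comb k e y = v" using s by (simp add: fun_eq_iff)
    ultimately show "v \<in> lin_comb k e ` solution_space n m k A" by blast
  qed
qed

lemma card_kernel_lin_comb:
  fixes A :: "nat \<Rightarrow> nat \<Rightarrow> 'a::{finite,field}"
  assumes "\<not> annihilates_kernel m k A e"
  shows "card {w \<in> solution_space n m k A. lin_comb k e w = 0} * card (UNIV :: 'a set) ^ n
       = card (solution_space n m k A)"
proof -
  have "card (solution_space n m k A)
      = card (lin_comb k e ` solution_space n m k A)
        * card {w \<in> solution_space n m k A. lin_comb k e w = 0}"
    by (rule card_eq_card_image_mult_card_kernel)
      (simp_all add: finite_solution_space solution_space_add solution_space_diff lin_comb_add)
  then show ?thesis by (simp add: lin_comb_image_solution_space[OF assms] card_fvecs)
qed

section \<open>Tuples avoiding linear dependencies\<close>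

definition dependent_tuples :: "nat \<Rightarrow> (nat \<Rightarrow> nat \<Rightarrow> 'a::field) set \<Rightarrow> nat \<Rightarrow> (nat \<Rightarrow> 'a) \<Rightarrow>
    (nat \<Rightarrow> 'a) \<Rightarrow> (nat \<Rightarrow> 'a) \<Rightarrow> (nat \<Rightarrow> nat \<Rightarrow> nat \<Rightarrow> 'a) set" where
  "dependent_tuples l P k e c \<alpha> = {u \<in> PiE {..<l} (\<lambda>_. P).
      vsum {..<l} (\<lambda>i. vscale (c i) (lin_comb k e (u i) + \<alpha>)) = (\<lambda>_. 0)}"

lemma card_dependent_slice_le_card_kernel:
  fixes A :: "nat \<Rightarrow> nat \<Rightarrow> 'a::{finite,field}"
  assumes P: "P \<subseteq> solution_space n m k A" and i0: "i0 < l" "c i0 \<noteq> 0"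
    and \<alpha>: "\<alpha> \<in> fvecs n" and e: "\<not> annihilates_kernel m k A e"
    and u: "u \<in> PiE {..<l} (\<lambda>_. P)"
  shows "card {x \<in> P. u(i0 := x) \<in> dependent_tuples l P k e c \<alpha>}
       \<le> card {w \<in> solution_space n m k A. lin_comb k e w = 0}"
proof -
  let ?W = "solution_space n m k A" and ?L = "lin_comb k e"
  \<comment> \<open>solving the dependency for the \<open>i0\<close>-th summand leaves a right-hand side \<open>G\<close> free of \<open>u i0\<close>\<close>
  define G where "G = (\<lambda>t. - \<alpha> t - (\<Sum>i\<in>{..<l} - {i0}. c i * (?L (u i) t + \<alpha> t)) / c i0)"
  have sub: "{x \<in> P. u(i0 := x) \<in> dependent_tuples l P k e c \<alpha>} \<subseteq> {w \<in> ?W. ?L w = G}"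
  proof
    fix x assume x: "x \<in> {x \<in> P. u(i0 := x) \<in> dependent_tuples l P k e c \<alpha>}"
    have "?L x = G"
    proof
      fix t
      have "(\<Sum>i<l. c i * (?L ((u(i0 := x)) i) t + \<alpha> t)) = 0"
        using x by (auto simp: dependent_tuples_def vsum_def vscale_def fun_eq_iff)
      moreover have "(\<Sum>i\<in>{..<l} - {i0}. c i * (?L ((u(i0 := x)) i) t + \<alpha> t))
          = (\<Sum>i\<in>{..<l} - {i0}. c i * (?L (u i) t + \<alpha> t))"
        by (rule sum.cong) auto
      ultimately have "c i0 * (?L x t + \<alpha> t) + (\<Sum>i\<in>{..<l} - {i0}. c i * (?L (u i) t + \<alpha> t)) = 0"
        using i0 by (subst (asm) sum.remove[of _ i0]) auto
      then show "?L x t = G t" using i0 by (simp add: G_def field_simps eq_neg_iff_add_eq_0)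
    qed
    then show "x \<in> {w \<in> ?W. ?L w = G}" using x P by blast
  qed
  have fin: "finite {w \<in> ?W. ?L w = G}" using finite_solution_space[of n m k A] by simp
  have "G \<in> ?L ` ?W"
  proof -
    have "\<forall>i<l. u i \<in> ?W" using u P by (auto simp: PiE_iff)
    then have "G \<in> fvecs n" using \<alpha> by (auto simp: G_def fvecs_def mem_solution_space_iff)
    then show ?thesis using lin_comb_image_solution_space[OF e] by blast
  qed
  then have "card {w \<in> ?W. ?L w = G} = card {w \<in> ?W. ?L w = 0}"
    by (intro card_fiber_eq_card_kernel)
      (simp_all add: solution_space_add solution_space_diff lin_comb_add)
  with card_mono[OF fin sub] show ?thesis by simp
qed

lemma card_dependent_tuples:
  fixes A :: "nat \<Rightarrow> nat \<Rightarrow> 'a::{finite,field}"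
  assumes P: "P \<subseteq> solution_space n m k A" and i0: "i0 < l" "c i0 \<noteq> 0"
    and \<alpha>: "\<alpha> \<in> fvecs n" and e: "\<not> annihilates_kernel m k A e"
  shows "card (dependent_tuples l P k e c \<alpha>) * card (UNIV :: 'a set) ^ n
       \<le> card (solution_space n m k A) * card P ^ (l - 1)"
proof -
  let ?K = "{w \<in> solution_space n m k A. lin_comb k e w = 0}"
  have "finite P" using P finite_solution_space by (rule finite_subset)
  have "dependent_tuples l P k e c \<alpha> = {u \<in> PiE {..<l} (\<lambda>_. P). u \<in> dependent_tuples l P k e c \<alpha>}"
    by (auto simp: dependent_tuples_def)
  also have "card \<dots> \<le> card ?K * card P ^ (card {..<l} - 1)"
  proof (rule card_PiE_coordinate_constrained)
    show "finite {..<l}" "i0 \<in> {..<l}" "finite P" using i0 \<open>finite P\<close> by simp_all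
    fix u assume "u \<in> PiE {..<l} (\<lambda>_. P)"
    with card_dependent_slice_le_card_kernel[of P n m k A i0 l c \<alpha> e u] P i0 \<alpha> e
    show "card {x \<in> P. u(i0 := x) \<in> dependent_tuples l P k e c \<alpha>} \<le> card ?K" by blast
  qed
  finally have "card (dependent_tuples l P k e c \<alpha>) \<le> card ?K * card P ^ (l - 1)"
    by (simp only: card_lessThan)
  then have "card (dependent_tuples l P k e c \<alpha>) * card (UNIV :: 'a set) ^ n
      \<le> card ?K * card P ^ (l - 1) * card (UNIV :: 'a set) ^ n" by (rule mult_le_mono1)
  also have "\<dots> = (card ?K * card (UNIV :: 'a set) ^ n) * card P ^ (l - 1)" by (simp only: mult_ac)
  also have "card ?K * card (UNIV :: 'a set) ^ n = card (solution_space n m k A)"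
    by (rule card_kernel_lin_comb[OF e])
  finally show ?thesis .
qed

lemma exists_tuple_avoiding_dependencies:
  fixes A :: "nat \<Rightarrow> nat \<Rightarrow> 'a::{finite,field}"
  assumes l: "l \<ge> 1" and P: "P \<subseteq> solution_space n m k A" and "finite T"
    and T: "\<And>e c \<alpha>. (e, c, \<alpha>) \<in> T \<Longrightarrow>
              \<not> annihilates_kernel m k A e \<and> (\<exists>i<l. c i \<noteq> 0) \<and> \<alpha> \<in> fvecs n"
    and dense: "card T * card (solution_space n m k A) < card P * card (UNIV :: 'a set) ^ n"
  shows "\<exists>u \<in> PiE {..<l} (\<lambda>_. P). \<forall>(e, c, \<alpha>) \<in> T. u \<notin> dependent_tuples l P k e c \<alpha>"
proof -
  let ?q = "card (UNIV :: 'a set)" and ?W = "solution_space n m k A"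
  let ?U = "PiE {..<l} (\<lambda>_. P)"
  let ?B = "\<Union>(e, c, \<alpha>) \<in> T. dependent_tuples l P k e c \<alpha>"
  have "card ?B * ?q ^ n \<le> card T * (card ?W * card P ^ (l - 1))"
  proof (rule card_UN_mult_le[OF \<open>finite T\<close>])
    fix x assume "x \<in> T"
    then obtain e c \<alpha> where x: "x = (e, c, \<alpha>)" and "(e, c, \<alpha>) \<in> T" by (cases x) auto
    with T obtain i0 where "i0 < l" "c i0 \<noteq> 0" "\<alpha> \<in> fvecs n" "\<not> annihilates_kernel m k A e"
      by blast
    from card_dependent_tuples[of P n m k A i0 l c \<alpha> e] P this x
    show "card (case x of (e, c, \<alpha>) \<Rightarrow> dependent_tuples l P k e c \<alpha>) * ?q ^ n
        \<le> card ?W * card P ^ (l - 1)" by simp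
  qed
  also have "\<dots> = card T * card ?W * card P ^ (l - 1)" by (simp only: mult.assoc)
  also have "\<dots> < card P * ?q ^ n * card P ^ (l - 1)"
  proof (rule mult_strict_right_mono[OF dense])
    show "0 < card P ^ (l - 1)" using dense by (cases "card P") auto
  qed
  also have "\<dots> = card ?U * ?q ^ n"
    using l by (simp add: card_PiE power_eq_if)
  finally have "card ?B < card ?U" by simp
  moreover have "?B \<subseteq> ?U" by (auto simp: dependent_tuples_def)
  ultimately have "\<not> ?U \<subseteq> ?B" using subset_antisym by fastforce
  then obtain u where "u \<in> ?U" "u \<notin> ?B" by blast
  then show ?thesis by auto
qed

lemma lin_comb_eq_zero_if_annihilates_kernel:
  assumes "w \<in> solution_space n m k A" and "annihilates_kernel m k A e"
  shows "lin_comb k e w = (\<lambda>_. 0)"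
proof
  fix t
  have "(\<lambda>j. w j t) \<in> scalar_kernel m k A"
    using assms(1) by (simp add: mem_solution_space_iff scalar_kernel_def)
  then show "lin_comb k e w t = 0" using assms(2) by (simp add: annihilates_kernel_def)
qed

lemma lin_generic_if_avoids_dependencies:
  fixes A :: "nat \<Rightarrow> nat \<Rightarrow> 'a::field"
  assumes avoid: "\<And>e. e \<in> PiE {..<k} (\<lambda>_. UNIV) \<Longrightarrow> \<not> annihilates_kernel m k A e \<Longrightarrow>
                    u \<notin> dependent_tuples l P k e b 0"
    and u: "u \<in> PiE {..<l} (\<lambda>_. P)"
  shows "lin_generic m k A (\<lambda>j. vsum {..<l} (\<lambda>i. vscale (b i) (u i j)))"
  unfolding lin_generic_def
proof (intro allI impI)
  fix c :: "nat \<Rightarrow> 'a"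
  let ?y = "\<lambda>j. vsum {..<l} (\<lambda>i. vscale (b i) (u i j))"
  let ?e = "restrict c {..<k}"
  assume "vsum {..<k} (\<lambda>j. vscale (c j) (?y j)) = (\<lambda>_. 0)"
  then have "lin_comb k ?e ?y = (\<lambda>_. 0)" by (simp add: fun_eq_iff lin_comb_def[symmetric])
  then have "u \<in> dependent_tuples l P k ?e b 0"
    using u by (simp add: dependent_tuples_def lin_comb_combination)
  moreover have "?e \<in> PiE {..<k} (\<lambda>_. UNIV)" by simp
  ultimately have "annihilates_kernel m k A ?e" using avoid by blast
  then have "annihilates_kernel m k A c" by (simp add: annihilates_kernel_def)
  then show "\<exists>d. \<forall>j<k. c j = (\<Sum>i<m. d i * A i j)" by (rule in_row_space_if_annihilates_kernel)
qed

lemma combination_mem_aff_sumset: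
  fixes b :: "nat \<Rightarrow> 'a::field"
  assumes b: "\<forall>i<l. b i \<noteq> 0" "(\<Sum>i<l. b i) = 0" and j: "j < k"
    and u: "u \<in> PiE {..<l} (\<lambda>_. P)" and PS: "\<forall>w\<in>P. a + w \<in> prefix_Pi k (\<lambda>_. S)"
    and avoid: "\<And>c. c \<in> PiE {..<l} (\<lambda>_. UNIV) \<Longrightarrow> (\<exists>i<l. c i \<noteq> 0) \<Longrightarrow>
                  u \<notin> dependent_tuples l P k (\<lambda>j'. if j' = j then 1 else 0) c (a j)"
  shows "vsum {..<l} (\<lambda>i. vscale (b i) (u i j)) \<in> aff_sumset l (\<lambda>i. set_scale (b i) S)"
proof -
  \<comment> \<open>as the \<open>b\<^sub>i\<close> sum to zero, translating every \<open>u\<^sub>i\<close> by \<open>a\<close> does not change the sum\<close>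
  define x where "x i = vscale (b i) (a j + u i j)" for i
  have "vsum {..<l} (\<lambda>i. vscale (b i) (u i j)) = vsum {..<l} x"
    using b(2) by (simp add: fun_eq_iff x_def vsum_def vscale_def algebra_simps sum.distrib
        sum_distrib_right[symmetric])
  moreover have "\<forall>i<l. x i \<in> set_scale (b i) S"
    using u PS j by (auto simp: x_def set_scale_def prefix_Pi_def PiE_iff)
  moreover have "aff_indep l x"
    unfolding aff_indep_def
  proof (intro allI impI ballI, rule ccontr)
    fix c :: "nat \<Rightarrow> 'a" and i0
    assume dep: "(\<Sum>i<l. c i) = 0 \<and> vsum {..<l} (\<lambda>i. vscale (c i) (x i)) = (\<lambda>_. 0)"
      and i0: "i0 < l" "c i0 \<noteq> 0"
    let ?c = "restrict (\<lambda>i. c i * b i) {..<l}"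
    have "vsum {..<l} (\<lambda>i. vscale (?c i) (lin_comb k (\<lambda>j'. if j' = j then 1 else 0) (u i) + a j))
        = vsum {..<l} (\<lambda>i. vscale (c i) (x i))"
      using j by (auto simp: fun_eq_iff vsum_def vscale_def x_def lin_comb_unit algebra_simps
          intro!: sum.cong)
    then have "u \<in> dependent_tuples l P k (\<lambda>j'. if j' = j then 1 else 0) ?c (a j)"
      using u dep by (simp add: dependent_tuples_def)
    moreover have "\<exists>i<l. ?c i \<noteq> 0" using i0 b(1) by auto
    ultimately show False using avoid by auto
  qed
  ultimately show ?thesis unfolding aff_sumset_def by (intro CollectI exI[of _ x]) simp
qed

lemma exists_dense_translate:
  fixes A :: "nat \<Rightarrow> nat \<Rightarrow> 'a::{finite,field}"
  assumes S: "S \<subseteq> fvecs n" and k: "k \<ge> 1"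
    and big: "D * card (UNIV :: 'a set) ^ (n * (k - 1)) < card S ^ k"
  obtains a where "a \<in> fvec_tuples n k"
    and "D * card (solution_space n m k A)
         < card {w \<in> solution_space n m k A. a + w \<in> prefix_Pi k (\<lambda>_. S)}
           * card (UNIV :: 'a set) ^ n"
proof -
  let ?q = "card (UNIV :: 'a set)" and ?V = "fvec_tuples n k :: (nat \<Rightarrow> nat \<Rightarrow> 'a) set"
  let ?W = "solution_space n m k A" and ?Z = "prefix_Pi k (\<lambda>_. S)"
  have "?W \<subseteq> ?V" by (auto simp: solution_space_def)
  moreover have "?Z \<subseteq> ?V" using S by (auto simp: prefix_Pi_def)
  moreover have "0 \<in> ?V" by (simp add: mem_fvec_tuples_iff)
  moreover have "u - w \<in> ?V" if "u \<in> ?V" "w \<in> ?V" for u w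
    using that by (simp add: mem_fvec_tuples_iff)
  ultimately obtain a where a: "a \<in> ?V"
    and hits: "card ?W * card ?Z \<le> card ?V * card {w \<in> ?W. a + w \<in> ?Z}"
    using exists_translate_hitting_many[OF finite_fvec_tuples] by blast
  define p where "p = card {w \<in> ?W. a + w \<in> ?Z}"
  have "card ?W > 0"
    using zero_mem_solution_space finite_solution_space card_gt_0_iff by blast
  then have "D * card ?W * ?q ^ (n * (k - 1)) < card ?W * card S ^ k"
    using big by (simp add: algebra_simps)
  also have "\<dots> = card ?W * card ?Z" by (simp add: card_prefix_Pi)
  also have "\<dots> \<le> card ?V * p" unfolding p_def by (rule hits)
  also have "card ?V = ?q ^ n * ?q ^ (n * (k - 1))"
    using k by (simp add: card_fvec_tuples flip: power_add) (simp add: algebra_simps)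
  finally have "D * card ?W * ?q ^ (n * (k - 1)) < p * ?q ^ n * ?q ^ (n * (k - 1))"
    by (simp only: ac_simps)
  then have "D * card ?W < p * ?q ^ n" by (simp only: mult_less_cancel2)
  then show ?thesis using that a unfolding p_def by blast
qed

text \<open>A constraint \<open>(e, c, \<alpha>)\<close> excludes the tuples in \<open>dependent_tuples l P k e c \<alpha>\<close>. Those of
  the first kind would give \<open>e \<cdot> y = 0\<close> for the combination \<open>y = \<Sum> b\<^sub>i u\<^sub>i\<close>, those of the second
  kind a linear dependence among the summands \<open>b\<^sub>i (a\<^sub>j + u\<^sub>i\<^sub>j)\<close> of \<open>y\<^sub>j\<close>.\<close>

definition bad_constraints :: "nat \<Rightarrow> nat \<Rightarrow> (nat \<Rightarrow> nat \<Rightarrow> 'a::field) \<Rightarrow> nat \<Rightarrow> (nat \<Rightarrow> 'a) \<Rightarrow>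
    (nat \<Rightarrow> nat \<Rightarrow> 'a) \<Rightarrow> ((nat \<Rightarrow> 'a) \<times> (nat \<Rightarrow> 'a) \<times> (nat \<Rightarrow> 'a)) set" where
  "bad_constraints m k A l b a =
     (\<lambda>e. (e, b, 0)) ` {e \<in> PiE {..<k} (\<lambda>_. UNIV). \<not> annihilates_kernel m k A e} \<union>
     (\<lambda>(j, c). (\<lambda>j'. if j' = j then 1 else 0, c, a j)) `
       ({j. j < k \<and> \<not> annihilates_kernel m k A (\<lambda>j'. if j' = j then 1 else 0)} \<times>
        {c \<in> PiE {..<l} (\<lambda>_. UNIV). \<exists>i<l. c i \<noteq> 0})"

lemma card_coefficient_vectors_le:
  "card {c \<in> PiE {..<r} (\<lambda>_. UNIV :: 'a::finite set). Q c} \<le> card (UNIV :: 'a set) ^ r"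
proof -
  have "card {c \<in> PiE {..<r} (\<lambda>_. UNIV :: 'a set). Q c} \<le> card (PiE {..<r} (\<lambda>_. UNIV :: 'a set))"
    by (rule card_mono) (auto simp: finite_PiE)
  then show ?thesis by (simp add: card_funcsetE)
qed

lemma finite_bad_constraints:
  "finite (bad_constraints m k (A :: nat \<Rightarrow> nat \<Rightarrow> 'a::{finite,field}) l b a)"
  by (simp add: bad_constraints_def finite_PiE)

lemma card_bad_constraints:
  fixes A :: "nat \<Rightarrow> nat \<Rightarrow> 'a::{finite,field}"
  shows "card (bad_constraints m k A l b a)
       \<le> card (UNIV :: 'a set) ^ k + k * card (UNIV :: 'a set) ^ l"
proof -
  let ?q = "card (UNIV :: 'a set)" and ?unit = "\<lambda>j j'. if j' = j then 1 else (0 :: 'a)"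
  let ?E = "{e \<in> PiE {..<k} (\<lambda>_. UNIV :: 'a set). \<not> annihilates_kernel m k A e}"
  let ?J = "{j. j < k \<and> \<not> annihilates_kernel m k A (?unit j)}"
  let ?C = "{c \<in> PiE {..<l} (\<lambda>_. UNIV :: 'a set). \<exists>i<l. c i \<noteq> 0}"
  have "card ((\<lambda>e. (e, b, 0 :: nat \<Rightarrow> 'a)) ` ?E) \<le> ?q ^ k"
    by (rule order_trans[OF card_image_le card_coefficient_vectors_le]) (simp add: finite_PiE)
  moreover have "card ((\<lambda>(j, c). (?unit j, c, a j)) ` (?J \<times> ?C)) \<le> k * ?q ^ l"
  proof -
    have "card ?J \<le> k" using card_mono[of "{..<k}" ?J] by fastforce
    have "card ((\<lambda>(j, c). (?unit j, c, a j)) ` (?J \<times> ?C)) \<le> card ?J * card ?C"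
      by (rule order_trans[OF card_image_le]) (simp_all add: finite_PiE card_cartesian_product)
    also have "\<dots> \<le> k * ?q ^ l" by (rule mult_le_mono[OF \<open>card ?J \<le> k\<close> card_coefficient_vectors_le])
    finally show ?thesis .
  qed
  ultimately show ?thesis
    unfolding bad_constraints_def by (meson add_le_mono card_Un_le order_trans)
qed

lemma bad_constraints_admissible:
  assumes "l \<ge> 1" "\<forall>i<l. b i \<noteq> 0" "a \<in> fvec_tuples n k" "(e, c, \<alpha>) \<in> bad_constraints m k A l b a"
  shows "\<not> annihilates_kernel m k A e \<and> (\<exists>i<l. c i \<noteq> 0) \<and> \<alpha> \<in> fvecs n"
proof -
  have "\<exists>i<l. b i \<noteq> 0" using assms(1,2) by (auto intro: exI[of _ 0])
  then show ?thesis using assms(3,4) by (auto simp: bad_constraints_def fvecs_def prefix_Pi_def)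
qed

lemma combination_generic_solution:
  fixes A :: "nat \<Rightarrow> nat \<Rightarrow> 'a::field"
  assumes b: "\<forall>i<l. b i \<noteq> 0" "(\<Sum>i<l. b i) = 0"
    and P: "P \<subseteq> solution_space n m k A" "\<forall>w\<in>P. a + w \<in> prefix_Pi k (\<lambda>_. S)"
    and u: "u \<in> PiE {..<l} (\<lambda>_. P)"
    and avoid: "\<forall>(e, c, \<alpha>) \<in> bad_constraints m k A l b a. u \<notin> dependent_tuples l P k e c \<alpha>"
  defines "y \<equiv> \<lambda>j. vsum {..<l} (\<lambda>i. vscale (b i) (u i j))"
  shows "is_solution m k A y \<and> lin_generic m k A y \<and>
         (\<forall>j<k. y j \<in> aff_sumset l (\<lambda>i. set_scale (b i) S) \<union> {\<lambda>_. 0})"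
proof -
  let ?unit = "\<lambda>j j'. if j' = j then 1 else (0 :: 'a)"
  have y: "y \<in> solution_space n m k A"
    unfolding y_def using u P(1) by (intro combination_mem_solution_space) (auto simp: PiE_iff)
  have "lin_generic m k A y"
    unfolding y_def
  proof (rule lin_generic_if_avoids_dependencies[OF _ u])
    fix e assume "e \<in> PiE {..<k} (\<lambda>_. UNIV)" "\<not> annihilates_kernel m k A e"
    then have "(e, b, 0) \<in> bad_constraints m k A l b a" by (simp add: bad_constraints_def)
    with avoid show "u \<notin> dependent_tuples l P k e b 0" by blast
  qed
  moreover have "y j \<in> aff_sumset l (\<lambda>i. set_scale (b i) S) \<union> {\<lambda>_. 0}" if j: "j < k" for j
  proof (cases "annihilates_kernel m k A (?unit j)")
    case True
    then have "y j = (\<lambda>_. 0)"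
      using lin_comb_eq_zero_if_annihilates_kernel[OF y] lin_comb_unit[OF j] by metis
    then show ?thesis by simp
  next
    case False
    have "y j \<in> aff_sumset l (\<lambda>i. set_scale (b i) S)"
      unfolding y_def
    proof (rule combination_mem_aff_sumset[OF b j u P(2)])
      fix c :: "nat \<Rightarrow> 'a" assume "c \<in> PiE {..<l} (\<lambda>_. UNIV)" "\<exists>i<l. c i \<noteq> 0"
      then have "(?unit j, c, a j) \<in> bad_constraints m k A l b a"
        using j False by (auto simp: bad_constraints_def)
      with avoid show "u \<notin> dependent_tuples l P k (?unit j) c (a j)" by blast
    qed
    then show ?thesis by simp
  qed
  ultimately show ?thesis using y by (auto simp: solution_space_def)
qed

lemma exists_generic_solution_in_sumset:
  fixes A :: "nat \<Rightarrow> nat \<Rightarrow> 'a::{finite,field}"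
  assumes l: "l \<ge> 1" and b: "\<forall>i<l. b i \<noteq> 0" "(\<Sum>i<l. b i) = 0"
    and S: "S \<subseteq> fvecs n" and k: "k \<ge> 1"
    and big: "(card (UNIV :: 'a set) ^ k + k * card (UNIV :: 'a set) ^ l)
                * card (UNIV :: 'a set) ^ (n * (k - 1)) < card S ^ k"
  shows "\<exists>y. is_solution m k A y \<and> lin_generic m k A y \<and>
             (\<forall>j<k. y j \<in> aff_sumset l (\<lambda>i. set_scale (b i) S) \<union> {\<lambda>_. 0})"
proof -
  let ?q = "card (UNIV :: 'a set)" and ?W = "solution_space n m k A"
  obtain a where a: "a \<in> fvec_tuples n k"
    and dense: "(?q ^ k + k * ?q ^ l) * card ?W
                < card {w \<in> ?W. a + w \<in> prefix_Pi k (\<lambda>_. S)} * ?q ^ n"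
    using exists_dense_translate[OF S k big] .
  define P where "P = {w \<in> ?W. a + w \<in> prefix_Pi k (\<lambda>_. S)}"
  have P: "P \<subseteq> ?W" "\<forall>w\<in>P. a + w \<in> prefix_Pi k (\<lambda>_. S)" by (auto simp: P_def)
  have "card (bad_constraints m k A l b a) * card ?W \<le> (?q ^ k + k * ?q ^ l) * card ?W"
    by (rule mult_le_mono1[OF card_bad_constraints])
  also have "\<dots> < card P * ?q ^ n" using dense by (simp only: P_def)
  finally obtain u where u: "u \<in> PiE {..<l} (\<lambda>_. P)"
    and avoid: "\<forall>(e, c, \<alpha>) \<in> bad_constraints m k A l b a. u \<notin> dependent_tuples l P k e c \<alpha>"
    using exists_tuple_avoiding_dependencies[OF l P(1) finite_bad_constraints]
      bad_constraints_admissible[OF l b(1) a] by blast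
  show ?thesis using combination_generic_solution[OF b P u avoid] by blast
qed

lemma power_bound_from_root_density:
  fixes D q s k n :: nat
  assumes k: "k \<ge> 1" and q: "q \<ge> 1"
    and s: "(real D + 1) * root k (real q ^ (k - 1)) ^ n \<le> real s"
  shows "D * q ^ (n * (k - 1)) < s ^ k"
proof -
  define \<gamma> where "\<gamma> = root k (real q ^ (k - 1))"
  have \<gamma>k: "\<gamma> ^ k = real q ^ (k - 1)" using k by (simp add: \<gamma>_def)
  have \<gamma>: "\<gamma> > 0" using k q by (simp add: \<gamma>_def)
  have "real (D * q ^ (n * (k - 1))) = real D * (\<gamma> ^ k) ^ n"
    by (simp add: \<gamma>k mult.commute[of n] power_mult)
  also have "\<dots> = real D * (\<gamma> ^ n) ^ k"
    by (simp flip: power_mult add: mult.commute)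
  also have "\<dots> < (real D + 1) * (\<gamma> ^ n) ^ k" using \<gamma> by simp
  also have "\<dots> \<le> (real D + 1) ^ k * (\<gamma> ^ n) ^ k"
    using k \<gamma> by (intro mult_right_mono self_le_power) auto
  also have "\<dots> = ((real D + 1) * \<gamma> ^ n) ^ k" by (simp add: power_mult_distrib)
  also have "\<dots> \<le> real s ^ k" using s \<gamma> by (intro power_mono) (simp_all add: \<gamma>_def)
  also have "\<dots> = real (s ^ k)" by simp
  finally show ?thesis by (simp only: of_nat_less_iff)
qed

lemma root_pred_power_bounds:
  assumes k: "k \<ge> 1" and q: "q \<ge> 2"
  shows "1 \<le> root k (real q ^ (k - 1))" and "root k (real q ^ (k - 1)) < real q"
proof -
  show "1 \<le> root k (real q ^ (k - 1))" using k q by simp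
  have "root k (real q ^ (k - 1)) < root k (real q ^ k)" using k q by (simp add: power_strict_increasing)
  then show "root k (real q ^ (k - 1)) < real q" using k by (simp add: real_root_power_cancel)
qed

theorem corollaryD:
  fixes A :: "nat \<Rightarrow> nat \<Rightarrow> 'a::{finite,field}"
    and m k l :: nat and b :: "nat \<Rightarrow> 'a"
  assumes "l \<ge> 1"
    and "\<forall>i<l. b i \<noteq> 0"
    and "(\<Sum>i<l. b i) = 0"
  shows "\<exists>\<beta> \<gamma> :: real. \<beta> \<ge> 1 \<and> \<gamma> \<ge> 1 \<and> \<gamma> < real (card (UNIV :: 'a set)) \<and>
     (\<forall>n. \<forall>S \<subseteq> fvecs n. real (card S) \<ge> \<beta> * \<gamma> ^ n \<longrightarrow>
        (\<exists>y. is_solution m k A y \<and> lin_generic m k A y \<and>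
             (\<forall>j<k. y j \<in> aff_sumset l (\<lambda>i. set_scale (b i) S) \<union> {\<lambda>_. 0})))"
proof -
  define q where "q = card (UNIV :: 'a set)"
  have q: "q \<ge> 2" unfolding q_def using card_mono[of UNIV "{0, 1 :: 'a}"] by simp
  show ?thesis
  proof (cases "k = 0")
    case True
    then show ?thesis using q
      by (intro exI[of _ 1]) (auto simp: q_def is_solution_def lin_generic_def vsum_def)
  next
    case False
    then have k: "k \<ge> 1" by simp
    define D where "D = q ^ k + k * q ^ l"
    define \<gamma> where "\<gamma> = root k (real q ^ (k - 1))"
    have "1 \<le> \<gamma>" "\<gamma> < real q" using root_pred_power_bounds[OF k q] by (simp_all add: \<gamma>_def)
    moreover have "\<exists>y. is_solution m k A y \<and> lin_generic m k A y \<and>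
             (\<forall>j<k. y j \<in> aff_sumset l (\<lambda>i. set_scale (b i) S) \<union> {\<lambda>_. 0})"
      if "S \<subseteq> fvecs n" "(real D + 1) * \<gamma> ^ n \<le> real (card S)" for n S
      using exists_generic_solution_in_sumset[OF assms that(1) k]
        power_bound_from_root_density[OF k _ that(2)[unfolded \<gamma>_def]] q
      by (simp add: D_def q_def)
    ultimately show ?thesis unfolding q_def
      by (intro exI[of _ "real D + 1"] exI[of _ \<gamma>]) auto
  qed
qed

end
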